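(* Let $K\subseteq\mathbb{R}^m$ be closed, $G:\mathbb{R}^n\to\mathbb{R}^m$ locally Lipschitz continuous and second-order directionally differentiable at $x^*$, $\Psi=\{x:G(x)\in K\}$, $x^*\in\Psi$. If MSCQ for $\Psi$ holds at $x^*$, then for any $d\in\mathbb{R}^n$, $$\mathcal{T}^2_\Psi(x^*;d)=\{w\in\mathbb{R}^n: G''(x^*;d,w)\in\mathcal{T}^2_K(G(x^* );G'(x^*;d))\}.$$
   Context: $G'(x;d)=\lim_{t\downarrow0}(G(x+td)-G(x))/t$; $G''(x;d,w)=\lim_{t\downarrow0}\frac{G(x+td+\frac12t^2w)-G(x)-tG'(x;d)}{\frac12t^2}$; second-order directionally differentiable at $x$ means these limits exist for all $d,w$. Outer second-order tangent set of $C$ at $x$ in direction $d$: $\mathcal{T}^2_C(x;d)=\{w:\exists t_k\downarrow0,w^k\to w,x+t_kd+\frac12t_k^2w^k\in C\}$. MSCQ for $\Psi$ at $x^*$: there exist a neighborhood $U$ of $x^*$ and $\kappa>0$ with $\mathrm{dist}(x,\Psi)\le\kappa\,\mathrm{dist}(G(x),K)$ for all $x\in U$. *)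

theory Defs
  imports "HOL-Analysis.Analysis"
begin

definition loc_lipschitz :: "('a::metric_space \<Rightarrow> 'b::metric_space) \<Rightarrow> bool" where
  "loc_lipschitz G \<longleftrightarrow> (\<forall>x. \<exists>U L. open U \<and> x \<in> U \<and> L-lipschitz_on U G)"

definition dir_deriv :: "('a::real_normed_vector \<Rightarrow> 'b::real_normed_vector) \<Rightarrow> 'a \<Rightarrow> 'a \<Rightarrow> 'b" where
  "dir_deriv G x d = Lim (at_right (0::real)) (\<lambda>t. (G (x + t *\<^sub>R d) - G x) /\<^sub>R t)"

definition dir_deriv2 :: "('a::real_normed_vector \<Rightarrow> 'b::real_normed_vector) \<Rightarrow> 'a \<Rightarrow> 'a \<Rightarrow> 'a \<Rightarrow> 'b" where
  "dir_deriv2 G x d w = Lim (at_right (0::real))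
     (\<lambda>t. (G (x + t *\<^sub>R d + ((1/2) * t\<^sup>2) *\<^sub>R w) - G x - t *\<^sub>R dir_deriv G x d) /\<^sub>R ((1/2) * t\<^sup>2))"

definition sodd_at :: "('a::real_normed_vector \<Rightarrow> 'b::real_normed_vector) \<Rightarrow> 'a \<Rightarrow> bool" where
  "sodd_at G x \<longleftrightarrow>
     (\<forall>d. \<exists>v. ((\<lambda>t. (G (x + t *\<^sub>R d) - G x) /\<^sub>R t) \<longlongrightarrow> v) (at_right 0)) \<and>
     (\<forall>d w. \<exists>v. ((\<lambda>t. (G (x + t *\<^sub>R d + ((1/2) * t\<^sup>2) *\<^sub>R w) - G x - t *\<^sub>R dir_deriv G x d)
                      /\<^sub>R ((1/2) * t\<^sup>2)) \<longlongrightarrow> v) (at_right 0))"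

definition outer_tangent2 :: "'a::real_normed_vector set \<Rightarrow> 'a \<Rightarrow> 'a \<Rightarrow> 'a set" where
  "outer_tangent2 C x d = {w. \<exists>t wk. (\<forall>k. t k > 0) \<and> t \<longlonglongrightarrow> 0 \<and> wk \<longlonglongrightarrow> w \<and>
      (\<forall>k. x + t k *\<^sub>R d + ((1/2) * (t k)\<^sup>2) *\<^sub>R wk k \<in> C)}"

definition MSCQ :: "('a::real_normed_vector \<Rightarrow> 'b::real_normed_vector) \<Rightarrow> 'b set \<Rightarrow> 'a \<Rightarrow> bool" where
  "MSCQ G K xs \<longleftrightarrow> (\<exists>U \<kappa>. open U \<and> xs \<in> U \<and> \<kappa> > 0 \<and>
      (\<forall>x\<in>U. infdist x {y. G y \<in> K} \<le> \<kappa> * infdist (G x) K))"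

end

theory Submission
  imports Defs
begin

(* Along any sequences t_k -> 0+ and w_k -> w, the second-order difference quotients of G at xs
   converge to G''(xs;d,w), because local Lipschitz continuity lets one replace w_k by w at a
   cost of L |w_k - w|. This gives the inclusion from left to right directly. Conversely, if
   G''(xs;d,w) lies in the tangent set of K, then G maps the parabola xs + t d + t^2/2 w to
   within o(t^2) of K. By metric subregularity the parabola then stays within o(t^2) of Psi,
   and near-projections onto Psi give the required sequence w_k. *)

definition parabola :: "'a::real_normed_vector \<Rightarrow> 'a \<Rightarrow> 'a \<Rightarrow> real \<Rightarrow> 'a" where
  "parabola x d w t = x + t *\<^sub>R d + ((1/2) * t\<^sup>2) *\<^sub>R w"

definition second_diff_quot ::
    "('a::real_normed_vector \<Rightarrow> 'b::real_normed_vector) \<Rightarrow> 'a \<Rightarrow> 'a \<Rightarrow> 'b \<Rightarrow> 'a \<Rightarrow> real \<Rightarrow> 'b" where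
  "second_diff_quot G x d v w t = (G (parabola x d w t) - G x - t *\<^sub>R v) /\<^sub>R ((1/2) * t\<^sup>2)"

lemma outer_tangent2_parabola:
  "outer_tangent2 C x d = {w. \<exists>t wk. (\<forall>k. t k > 0) \<and> t \<longlonglongrightarrow> 0 \<and> wk \<longlonglongrightarrow> w \<and>
      (\<forall>k. parabola x d (wk k) (t k) \<in> C)}"
  by (simp add: outer_tangent2_def parabola_def)

lemma dist_parabola: "dist (parabola x d w t) (parabola x d w' t) = (1/2) * t\<^sup>2 * dist w w'"
proof -
  have "parabola x d w t - parabola x d w' t = ((1/2) * t\<^sup>2) *\<^sub>R (w - w')"
    by (simp add: parabola_def algebra_simps)
  then show ?thesis by (simp add: dist_norm)
qed

lemma tendsto_parabola:
  assumes "(t \<longlongrightarrow> 0) F" "(wk \<longlongrightarrow> w) F"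
  shows "((\<lambda>k. parabola x d (wk k) (t k)) \<longlongrightarrow> x) F"
proof -
  have "((\<lambda>k. parabola x d (wk k) (t k)) \<longlongrightarrow> x + 0 *\<^sub>R d + ((1/2) * 0\<^sup>2) *\<^sub>R w) F"
    unfolding parabola_def by (intro tendsto_intros assms)
  then show ?thesis by simp
qed

lemma parabola_second_diff_quot:
  assumes "t \<noteq> 0"
  shows "parabola (G x) v (second_diff_quot G x d v w t) t = G (parabola x d w t)"
proof -
  have "(1/2) * t\<^sup>2 \<noteq> 0" using assms by simp
  then show ?thesis unfolding parabola_def second_diff_quot_def by simp
qed

lemma norm_scaleR_inverse_pos: "s > 0 \<Longrightarrow> norm (y /\<^sub>R s) = norm y / s"
  by (simp add: divide_inverse mult.commute)

lemma dist_second_diff_quot: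
  assumes "t \<noteq> 0"
  shows "dist (second_diff_quot G x d v w t) (second_diff_quot G x d v w' t)
           = dist (G (parabola x d w t)) (G (parabola x d w' t)) / ((1/2) * t\<^sup>2)"
proof -
  have "second_diff_quot G x d v w t - second_diff_quot G x d v w' t
          = (G (parabola x d w t) - G (parabola x d w' t)) /\<^sub>R ((1/2) * t\<^sup>2)"
    unfolding second_diff_quot_def by (simp add: algebra_simps)
  moreover have "(1/2) * t\<^sup>2 > 0" using assms by simp
  ultimately show ?thesis
    unfolding dist_norm by (simp only: norm_scaleR_inverse_pos)
qed

lemma exists_dist_less_infdist_add:
  fixes x :: "'a::metric_space"
  assumes "A \<noteq> {}" "e > 0"
  shows "\<exists>a\<in>A. dist x a < infdist x A + e"
proof -
  have "bdd_below ((\<lambda>a. dist x a) ` A)" by (rule bdd_belowI[of _ 0]) auto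
  moreover have "(INF a\<in>A. dist x a) < infdist x A + e"
    using infdist_notempty[OF assms(1)] assms(2) by simp
  ultimately show ?thesis using cINF_less_iff[OF assms(1)] by blast
qed

lemma mem_outer_tangent2_if_infdist:
  assumes "C \<noteq> {}" and tpos: "\<forall>k. t k > 0" and t0: "t \<longlonglongrightarrow> 0"
    and lim: "(\<lambda>k. infdist (parabola x d w (t k)) C / ((1/2) * (t k)\<^sup>2)) \<longlonglongrightarrow> 0"
  shows "w \<in> outer_tangent2 C x d"
proof -
  define s where "s k = (1/2) * (t k)\<^sup>2" for k
  have spos: "s k > 0" for k using tpos[rule_format, of k] by (simp add: s_def)
  have "\<exists>z\<in>C. dist (parabola x d w (t k)) z < infdist (parabola x d w (t k)) C + s k * t k" for k
    using exists_dist_less_infdist_add[OF \<open>C \<noteq> {}\<close>] spos tpos by simp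
  then obtain z where zC: "\<And>k. z k \<in> C"
    and zdist: "\<And>k. dist (parabola x d w (t k)) (z k) < infdist (parabola x d w (t k)) C + s k * t k"
    by metis
  define wk where "wk k = (z k - x - t k *\<^sub>R d) /\<^sub>R s k" for k
  have parabola_wk: "parabola x d (wk k) (t k) = z k" for k
    using spos[of k] by (simp add: parabola_def wk_def s_def)
  have "dist (wk k) w < infdist (parabola x d w (t k)) C / s k + t k" for k
  proof -
    have "s k * dist (wk k) w = dist (parabola x d w (t k)) (z k)"
      using dist_parabola[of x d "wk k" "t k" w] by (simp add: parabola_wk s_def dist_commute)
    also have "\<dots> < s k * (infdist (parabola x d w (t k)) C / s k + t k)"
      using zdist[of k] spos[of k] by (simp add: distrib_left)
    finally show ?thesis using spos[of k] by simp
  qed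
  then have "eventually (\<lambda>k. norm (dist (wk k) w) \<le> infdist (parabola x d w (t k)) C / s k + t k)
               sequentially"
    by (simp add: less_imp_le)
  moreover have "(\<lambda>k. infdist (parabola x d w (t k)) C / s k + t k) \<longlonglongrightarrow> 0"
    using tendsto_add[OF lim t0] by (simp add: s_def)
  ultimately have "(\<lambda>k. dist (wk k) w) \<longlonglongrightarrow> 0"
    by (rule Lim_null_comparison)
  then have "wk \<longlonglongrightarrow> w"
    by (rule tendsto_dist_iff[THEN iffD2])
  then show ?thesis
    unfolding outer_tangent2_parabola mem_Collect_eq
    by (intro exI[of _ t] exI[of _ wk]) (simp add: tpos t0 parabola_wk zC)
qed

lemma tendsto_second_diff_quot_seq:
  assumes lip: "L-lipschitz_on U G" "open U" "x \<in> U"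
    and lim: "(second_diff_quot G x d v w \<longlongrightarrow> c) (at_right 0)"
    and tpos: "\<forall>k. t k > 0" and t0: "t \<longlonglongrightarrow> 0" and wk: "wk \<longlonglongrightarrow> w"
  shows "(\<lambda>k. second_diff_quot G x d v (wk k) (t k)) \<longlonglongrightarrow> c"
proof (rule Lim_transform)
  have "filterlim t (at_right 0) sequentially"
    unfolding filterlim_at using tpos t0 by (auto intro!: always_eventually simp: less_imp_neq[symmetric])
  then show "(\<lambda>k. second_diff_quot G x d v w (t k)) \<longlonglongrightarrow> c"
    using filterlim_compose[OF lim] by blast
  have "eventually (\<lambda>k. parabola x d (wk k) (t k) \<in> U \<and> parabola x d w (t k) \<in> U) sequentially"
    using topological_tendstoD[OF tendsto_parabola[OF t0 wk] lip(2,3)]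
      topological_tendstoD[OF tendsto_parabola[OF t0 tendsto_const] lip(2,3)]
    by (simp add: eventually_conj)
  then have "eventually (\<lambda>k. norm (second_diff_quot G x d v (wk k) (t k) - second_diff_quot G x d v w (t k))
               \<le> L * dist (wk k) w) sequentially"
  proof (rule eventually_mono)
    fix k assume "parabola x d (wk k) (t k) \<in> U \<and> parabola x d w (t k) \<in> U"
    then have lipk: "dist (G (parabola x d (wk k) (t k))) (G (parabola x d w (t k)))
                 \<le> L * ((1/2) * (t k)\<^sup>2 * dist (wk k) w)"
      using lipschitz_onD[OF lip(1)] dist_parabola by metis
    have spos: "(1/2) * (t k)\<^sup>2 > 0" using tpos[rule_format, of k] by simp
    have "norm (second_diff_quot G x d v (wk k) (t k) - second_diff_quot G x d v w (t k))
            = dist (G (parabola x d (wk k) (t k))) (G (parabola x d w (t k))) / ((1/2) * (t k)\<^sup>2)"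
      using dist_second_diff_quot[of "t k"] spos by (simp add: dist_norm)
    also have "\<dots> \<le> L * ((1/2) * (t k)\<^sup>2 * dist (wk k) w) / ((1/2) * (t k)\<^sup>2)"
      using lipk spos by (rule divide_right_mono[OF _ less_imp_le])
    also have "\<dots> = L * dist (wk k) w"
      using spos by simp
    finally show "norm (second_diff_quot G x d v (wk k) (t k) - second_diff_quot G x d v w (t k))
               \<le> L * dist (wk k) w" .
  qed
  moreover have "(\<lambda>k. L * dist (wk k) w) \<longlonglongrightarrow> 0"
    using tendsto_mult_left[OF wk[THEN tendsto_dist_iff[THEN iffD1]], of L] by simp
  ultimately show "(\<lambda>k. second_diff_quot G x d v (wk k) (t k) - second_diff_quot G x d v w (t k)) \<longlonglongrightarrow> 0"
    by (rule Lim_null_comparison)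
qed

lemma tendsto_dir_deriv2:
  assumes "sodd_at G x"
  shows "(second_diff_quot G x d (dir_deriv G x d) w \<longlongrightarrow> dir_deriv2 G x d w) (at_right 0)"
proof -
  obtain c where "(second_diff_quot G x d (dir_deriv G x d) w \<longlongrightarrow> c) (at_right 0)"
    using assms unfolding sodd_at_def second_diff_quot_def parabola_def by blast
  moreover from this have "dir_deriv2 G x d w = c"
    unfolding dir_deriv2_def second_diff_quot_def parabola_def
    by (intro tendsto_Lim) auto
  ultimately show ?thesis by simp
qed

lemma tendsto_dir_deriv2_seq:
  assumes "loc_lipschitz G" "sodd_at G x"
    and "\<forall>k. t k > 0" "t \<longlonglongrightarrow> 0" "wk \<longlonglongrightarrow> w"
  shows "(\<lambda>k. second_diff_quot G x d (dir_deriv G x d) (wk k) (t k)) \<longlonglongrightarrow> dir_deriv2 G x d w"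
proof -
  obtain U L where "open U" "x \<in> U" "L-lipschitz_on U G"
    using assms(1) unfolding loc_lipschitz_def by blast
  then show ?thesis
    using tendsto_second_diff_quot_seq tendsto_dir_deriv2[OF assms(2)] assms(3-5) by blast
qed

lemma outer_tangent2_preimage_subset:
  assumes "loc_lipschitz G" "sodd_at G x"
  shows "outer_tangent2 {y. G y \<in> K} x d
           \<subseteq> {w. dir_deriv2 G x d w \<in> outer_tangent2 K (G x) (dir_deriv G x d)}"
proof
  fix w assume "w \<in> outer_tangent2 {y. G y \<in> K} x d"
  then obtain t wk where tpos: "\<forall>k. t k > 0" and t0: "t \<longlonglongrightarrow> 0" and wk: "wk \<longlonglongrightarrow> w"
    and mem: "\<forall>k. G (parabola x d (wk k) (t k)) \<in> K"
    unfolding outer_tangent2_parabola by blast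
  define u where "u k = second_diff_quot G x d (dir_deriv G x d) (wk k) (t k)" for k
  have "u \<longlonglongrightarrow> dir_deriv2 G x d w"
    unfolding u_def using tendsto_dir_deriv2_seq[OF assms tpos t0 wk] .
  moreover have "parabola (G x) (dir_deriv G x d) (u k) (t k) \<in> K" for k
  proof -
    have "t k \<noteq> 0" using tpos[rule_format, of k] by simp
    show ?thesis
      unfolding u_def parabola_second_diff_quot[OF \<open>t k \<noteq> 0\<close>] using mem by blast
  qed
  ultimately show "w \<in> {w. dir_deriv2 G x d w \<in> outer_tangent2 K (G x) (dir_deriv G x d)}"
    unfolding outer_tangent2_parabola using tpos t0 by blast
qed

lemma outer_tangent2_preimage_supset:
  assumes "loc_lipschitz G" "sodd_at G x" "G x \<in> K" "MSCQ G K x"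
  shows "{w. dir_deriv2 G x d w \<in> outer_tangent2 K (G x) (dir_deriv G x d)}
           \<subseteq> outer_tangent2 {y. G y \<in> K} x d"
proof
  fix w assume "w \<in> {w. dir_deriv2 G x d w \<in> outer_tangent2 K (G x) (dir_deriv G x d)}"
  then obtain t u where tpos: "\<forall>k. t k > 0" and t0: "t \<longlonglongrightarrow> 0" and u: "u \<longlonglongrightarrow> dir_deriv2 G x d w"
    and mem: "\<And>k. parabola (G x) (dir_deriv G x d) (u k) (t k) \<in> K"
    unfolding outer_tangent2_parabola by blast
  obtain U \<kappa> where "open U" "x \<in> U" "\<kappa> > 0"
    and subreg: "\<forall>y\<in>U. infdist y {y. G y \<in> K} \<le> \<kappa> * infdist (G y) K"
    using assms(4) unfolding MSCQ_def by blast
  define q where "q k = second_diff_quot G x d (dir_deriv G x d) w (t k)" for k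
  have q: "q \<longlonglongrightarrow> dir_deriv2 G x d w"
    unfolding q_def using tendsto_dir_deriv2_seq[OF assms(1,2) tpos t0 tendsto_const] .
  have "eventually (\<lambda>k. parabola x d w (t k) \<in> U) sequentially"
    using topological_tendstoD[OF tendsto_parabola[OF t0 tendsto_const] \<open>open U\<close> \<open>x \<in> U\<close>] .
  then have "eventually (\<lambda>k. norm (infdist (parabola x d w (t k)) {y. G y \<in> K} / ((1/2) * (t k)\<^sup>2))
               \<le> \<kappa> * dist (q k) (u k)) sequentially"
  proof (rule eventually_mono)
    fix k assume inU: "parabola x d w (t k) \<in> U"
    have "t k \<noteq> 0" using tpos[rule_format, of k] by simp
    then have spos: "(1/2) * (t k)\<^sup>2 > 0" by simp
    have "infdist (G (parabola x d w (t k))) K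
            \<le> dist (G (parabola x d w (t k))) (parabola (G x) (dir_deriv G x d) (u k) (t k))"
      using mem by (rule infdist_le)
    also have "\<dots> = (1/2) * (t k)\<^sup>2 * dist (q k) (u k)"
      unfolding q_def
        parabola_second_diff_quot[OF \<open>t k \<noteq> 0\<close>, where G = G and v = "dir_deriv G x d", symmetric]
      by (rule dist_parabola)
    finally have image_close:
      "infdist (G (parabola x d w (t k))) K \<le> (1/2) * (t k)\<^sup>2 * dist (q k) (u k)" .
    have "infdist (parabola x d w (t k)) {y. G y \<in> K}
            \<le> \<kappa> * infdist (G (parabola x d w (t k))) K"
      using subreg inU by blast
    also have "\<dots> \<le> \<kappa> * ((1/2) * (t k)\<^sup>2 * dist (q k) (u k))"
      using image_close less_imp_le[OF \<open>\<kappa> > 0\<close>] by (rule mult_left_mono)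
    also have "\<dots> = \<kappa> * dist (q k) (u k) * ((1/2) * (t k)\<^sup>2)"
      by (simp only: ac_simps)
    finally have "infdist (parabola x d w (t k)) {y. G y \<in> K} / ((1/2) * (t k)\<^sup>2)
                    \<le> \<kappa> * dist (q k) (u k)"
      unfolding pos_divide_le_eq[OF spos] .
    then show "norm (infdist (parabola x d w (t k)) {y. G y \<in> K} / ((1/2) * (t k)\<^sup>2))
               \<le> \<kappa> * dist (q k) (u k)"
      unfolding real_norm_def abs_of_nonneg[OF divide_nonneg_pos[OF infdist_nonneg spos]] .
  qed
  moreover have "(\<lambda>k. \<kappa> * dist (q k) (u k)) \<longlonglongrightarrow> 0"
    using tendsto_mult_left[OF tendsto_dist[OF q u], of \<kappa>] by simp
  ultimately have "(\<lambda>k. infdist (parabola x d w (t k)) {y. G y \<in> K} / ((1/2) * (t k)\<^sup>2)) \<longlonglongrightarrow> 0"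
    by (rule Lim_null_comparison)
  moreover have "{y. G y \<in> K} \<noteq> {}" using assms(3) by blast
  ultimately show "w \<in> outer_tangent2 {y. G y \<in> K} x d"
    using tpos t0 by (intro mem_outer_tangent2_if_infdist)
qed

theorem proposition3p2:
  fixes G :: "real^'n \<Rightarrow> real^'m" and K :: "(real^'m) set" and xs :: "real^'n"
  assumes "closed K"
    and "loc_lipschitz G"
    and "sodd_at G xs"
    and "G xs \<in> K"
    and "MSCQ G K xs"
  shows "\<forall>d. outer_tangent2 {x. G x \<in> K} xs d =
           {w. dir_deriv2 G xs d w \<in> outer_tangent2 K (G xs) (dir_deriv G xs d)}"
proof
  fix d
  show "outer_tangent2 {x. G x \<in> K} xs d =
          {w. dir_deriv2 G xs d w \<in> outer_tangent2 K (G xs) (dir_deriv G xs d)}"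
    using outer_tangent2_preimage_subset[OF assms(2,3)] outer_tangent2_preimage_supset[OF assms(2-5)]
    by (rule equalityI)
qed

end
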